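(* Let $\phi:K\to[0,\infty)$ be a convex function attaining its minimum value at $0$, and assume $\phi$ is not constant. Then $\lim_{|x|\to\infty}\phi(x)=\infty$.
   Context: $K$ is a field complete with respect to a non-trivial non-archimedean absolute value, $B_K=\{x\in K:|x|\le1\}$. A function $\phi:K\to\mathbb R$ is convex if for all $n$, $x_1,\dots,x_n\in K$ and $\lambda_1,\dots,\lambda_n\in B_K$ with $\sum\lambda_i=1$ one has $\phi(\sum\lambda_ix_i)\le\max_i|\lambda_i|\phi(x_i)$. *)

theory Defs
  imports Main "HOL-Analysis.Analysis"
begin

definition nonarch_abs :: "('a::field \<Rightarrow> real) \<Rightarrow> bool" where
  "nonarch_abs v \<longleftrightarrow>
     (\<forall>x. 0 \<le> v x) \<and> (\<forall>x. v x = 0 \<longleftrightarrow> x = 0) \<and>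
     (\<forall>x y. v (x * y) = v x * v y) \<and>
     (\<forall>x y. v (x + y) \<le> max (v x) (v y))"

definition nontrivial_abs :: "('a::field \<Rightarrow> real) \<Rightarrow> bool" where
  "nontrivial_abs v \<longleftrightarrow> (\<exists>x. v x \<noteq> 0 \<and> v x \<noteq> 1)"

definition complete_abs :: "('a::field \<Rightarrow> real) \<Rightarrow> bool" where
  "complete_abs v \<longleftrightarrow>
     (\<forall>s::nat \<Rightarrow> 'a. (\<forall>e>0. \<exists>N. \<forall>m\<ge>N. \<forall>n\<ge>N. v (s m - s n) < e) \<longrightarrow>
        (\<exists>l. \<forall>e>0. \<exists>N. \<forall>n\<ge>N. v (s n - l) < e))"

definition na_convex :: "('a::field \<Rightarrow> real) \<Rightarrow> ('a \<Rightarrow> real) \<Rightarrow> bool" where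
  "na_convex v \<phi> \<longleftrightarrow>
     (\<forall>(n::nat) (x::nat \<Rightarrow> 'a) (l::nat \<Rightarrow> 'a).
        (\<forall>i<n. v (l i) \<le> 1) \<and> (\<Sum>i<n. l i) = 1 \<longrightarrow>
        \<phi> (\<Sum>i<n. l i * x i) \<le> (MAX i\<in>{..<n}. v (l i) * \<phi> (x i)))"

end

theory Submission
  imports Defs
begin

text \<open>Pick \<open>a\<close> with \<open>\<phi> a > \<phi> 0\<close>. For \<open>|x| > |a|\<close> write \<open>a = l x + (1 - l) 0\<close> with
  \<open>l = a / x\<close>; by the ultrametric inequality both \<open>|l|\<close> and \<open>|1 - l|\<close> are at most 1, so
  convexity gives \<open>\<phi> a \<le> max (|a| / |x| \<phi> x) (\<phi> 0)\<close>. As \<open>\<phi> a > \<phi> 0\<close>, the first term wins,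
  and \<open>\<phi>\<close> grows at least linearly in \<open>|x|\<close>.\<close>

lemma nonarch_absD:
  assumes "nonarch_abs v"
  shows "0 \<le> v x" and "v x = 0 \<longleftrightarrow> x = 0" and "v (x * y) = v x * v y"
    and "v (x + y) \<le> max (v x) (v y)"
  using assms unfolding nonarch_abs_def by blast+

lemma nonarch_abs_pos:
  assumes "nonarch_abs v" and "x \<noteq> 0"
  shows "0 < v x"
  using nonarch_absD(1,2)[OF assms(1), of x] assms(2) by linarith

lemma nonarch_abs_one:
  assumes "nonarch_abs v"
  shows "v 1 = 1"
proof -
  have "v 1 * v 1 = v 1"
    using nonarch_absD(3)[OF assms, of 1 1] by simp
  moreover have "v 1 \<noteq> 0"
    using nonarch_absD(2)[OF assms, of 1] by simp
  ultimately show ?thesis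
    by simp
qed

lemma nonarch_abs_minus:
  assumes "nonarch_abs v"
  shows "v (- x) = v x"
proof -
  have "v (-1) * v (-1) = 1"
    using nonarch_absD(3)[OF assms, of "-1" "-1"] nonarch_abs_one[OF assms] by simp
  then have "v (-1) = 1"
    using nonarch_absD(1)[OF assms, of "-1"] by (auto simp: square_eq_1_iff)
  then show ?thesis
    using nonarch_absD(3)[OF assms, of "-1" x] by simp
qed

lemma nonarch_abs_one_minus_le_one:
  assumes "nonarch_abs v" and "v l \<le> 1"
  shows "v (1 - l) \<le> 1"
  using nonarch_absD(4)[OF assms(1), of 1 "- l"] assms
  by (simp add: nonarch_abs_one nonarch_abs_minus)

lemma na_convex_two_points:
  assumes "na_convex v \<phi>" and "v l \<le> 1" and "v (1 - l) \<le> 1"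
  shows "\<phi> (l * x + (1 - l) * y) \<le> max (v l * \<phi> x) (v (1 - l) * \<phi> y)"
proof -
  define L where "L = (\<lambda>i::nat. if i = 0 then l else 1 - l)"
  define X where "X = (\<lambda>i::nat. if i = 0 then x else y)"
  have "\<forall>i<2. v (L i) \<le> 1"
    using assms(2,3) by (auto simp: L_def less_2_cases_iff)
  moreover have "(\<Sum>i<2. L i) = 1"
    by (simp add: L_def numeral_2_eq_2)
  ultimately have "\<phi> (\<Sum>i<2. L i * X i) \<le> (MAX i\<in>{..<2}. v (L i) * \<phi> (X i))"
    using assms(1) unfolding na_convex_def by blast
  moreover have "{..<2::nat} = {0, 1}"
    by auto
  ultimately show ?thesis
    by (simp add: L_def X_def)
qed

lemma na_convex_linear_growth:
  assumes "nonarch_abs v" and "na_convex v \<phi>"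
    and "0 \<le> \<phi> 0" and "\<phi> 0 < \<phi> a" and "v a < v x"
  shows "\<phi> a / v a * v x \<le> \<phi> x"
proof -
  have "a \<noteq> 0"
    using assms(4) by auto
  then have va_pos: "0 < v a"
    by (rule nonarch_abs_pos[OF assms(1)])
  then have vx_pos: "0 < v x"
    using assms(5) by linarith
  then have "x \<noteq> 0"
    using nonarch_absD(2)[OF assms(1), of x] by auto
  define l where "l = a / x"
  have "l * x + (1 - l) * 0 = a"
    using \<open>x \<noteq> 0\<close> by (simp add: l_def)
  then have "v a = v l * v x"
    using nonarch_absD(3)[OF assms(1), of l x] by simp
  then have vl: "v l = v a / v x"
    using vx_pos by (simp add: field_simps)
  have "v l \<le> 1"
    using vl assms(5) vx_pos by simp
  moreover have "v (1 - l) \<le> 1"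
    using assms(1) \<open>v l \<le> 1\<close> by (rule nonarch_abs_one_minus_le_one)
  ultimately have "\<phi> a \<le> max (v l * \<phi> x) (v (1 - l) * \<phi> 0)"
    using na_convex_two_points[OF assms(2), of l x 0] \<open>l * x + (1 - l) * 0 = a\<close> by simp
  moreover have "v (1 - l) * \<phi> 0 \<le> \<phi> 0"
    using \<open>v (1 - l) \<le> 1\<close> assms(3) nonarch_absD(1)[OF assms(1), of "1 - l"]
    by (simp add: mult_left_le_one_le)
  ultimately have "\<phi> a \<le> v l * \<phi> x"
    using assms(4) by (simp add: le_max_iff_disj)
  then show ?thesis
    using va_pos vx_pos vl by (simp add: field_simps)
qed

theorem mainTheorem9:
  fixes v :: "'a::field \<Rightarrow> real" and \<phi> :: "'a \<Rightarrow> real"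
  assumes "nonarch_abs v" and "nontrivial_abs v" and "complete_abs v"
    and "na_convex v \<phi>"
    and "\<forall>x. 0 \<le> \<phi> x"
    and "\<forall>x. \<phi> 0 \<le> \<phi> x"
    and "\<exists>x y. \<phi> x \<noteq> \<phi> y"
  shows "\<forall>M. \<exists>R. \<forall>x. v x > R \<longrightarrow> \<phi> x > M"
proof
  fix M :: real
  obtain b c where "\<phi> b \<noteq> \<phi> c"
    using assms(7) by blast
  then obtain a where a: "\<phi> 0 < \<phi> a"
    using assms(6) by (metis order_le_neq_trans)
  then have "a \<noteq> 0"
    by auto
  have \<phi>a_pos: "0 < \<phi> a"
    using a assms(5) by (metis order_le_less_trans)
  have va_pos: "0 < v a"
    using assms(1) \<open>a \<noteq> 0\<close> by (rule nonarch_abs_pos)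
  show "\<exists>R. \<forall>x. v x > R \<longrightarrow> \<phi> x > M"
  proof (intro exI allI impI)
    fix x
    assume x: "v x > max (v a) (M * v a / \<phi> a)"
    then have "M * v a / \<phi> a < v x"
      by simp
    then have "M < \<phi> a / v a * v x"
      using \<phi>a_pos va_pos by (simp add: divide_less_eq less_divide_eq mult.commute)
    also have "\<dots> \<le> \<phi> x"
      using x by (intro na_convex_linear_growth[OF assms(1,4)]) (simp_all add: a assms(5))
    finally show "\<phi> x > M" .
  qed
qed

end
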